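(* Let $n\in\mathbb{N}$ and let $T\subseteq\mathbb{F}_2^n$ (with $\mathbb{F}_2=\{0,1\}$). Let $C$ be the $n$-qubit projector $C=\sum_{z\in T}|z\rangle\langle z|$ onto the span of the computational basis states indexed by $T$, let $X=\sum_{j=1}^n\sigma^x_j$ where $\sigma^x_j$ is the Pauli-$X$ operator on qubit $j$, and for real angles $\beta,\gamma$ define $$|\beta,\gamma\rangle_1=e^{-i\beta X}e^{-i\gamma C}|+\rangle^{\otimes n},\qquad F_1(\beta,\gamma)=\langle\beta,\gamma|_1\,C\,|\beta,\gamma\rangle_1 .$$ Then $$F_1(\beta,\gamma)=\frac{1}{2^n}\sum_{k\in T}|c_k(\beta,\gamma)|^2,$$ where $$c_k(\beta,\gamma)=\sum_{d=0}^n\left(\#_d(k)\,(e^{-i\gamma}-1)+\binom{n}{d}\right)f_n(\beta,d),$$ with $\#_d(k)=|\{z\in T: d_H(z,k)=d\}|$, $f_n(\beta,d)=(\cos\beta)^{n-d}(-i\sin\beta)^d$, and $d_H$ the Hamming distance between bit strings.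
   Context: $T$ is the target space (set of bit strings encoding solutions of a decision problem instance); $|z\rangle$ for $z\in\mathbb{F}_2^n$ is the corresponding computational basis state, and $|+\rangle=(|0\rangle+|1\rangle)/\sqrt2$. *)

theory Defs
  imports Complex_Main
begin

text \<open>Bit strings of length n (elements of F_2^n) are boolean lists of length n.
  n-qubit state vectors are functions from bit strings to complex amplitudes
  (computational basis coordinates); n-qubit operators are matrices indexed by
  pairs of bit strings.\<close>

definition bits :: "nat \<Rightarrow> bool list set" where
  "bits n = {xs. length xs = n}"

definition hamming :: "bool list \<Rightarrow> bool list \<Rightarrow> nat" where
  "hamming x y = card {j. j < length x \<and> x ! j \<noteq> y ! j}"

type_synonym qstate = "bool list \<Rightarrow> complex"
type_synonym qop = "bool list \<Rightarrow> bool list \<Rightarrow> complex"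

definition mmul :: "nat \<Rightarrow> qop \<Rightarrow> qop \<Rightarrow> qop" where
  "mmul n A B = (\<lambda>z w. \<Sum>y\<in>bits n. A z y * B y w)"

definition mid :: "nat \<Rightarrow> qop" where
  "mid n = (\<lambda>z w. if z = w \<and> z \<in> bits n then 1 else 0)"

primrec mpow :: "nat \<Rightarrow> qop \<Rightarrow> nat \<Rightarrow> qop" where
  "mpow n A 0 = mid n"
| "mpow n A (Suc m) = mmul n A (mpow n A m)"

definition mscale :: "complex \<Rightarrow> qop \<Rightarrow> qop" where
  "mscale c A = (\<lambda>z w. c * A z w)"

definition mexp :: "nat \<Rightarrow> qop \<Rightarrow> qop" where
  "mexp n A = (\<lambda>z w. \<Sum>m. mpow n A m z w / fact m)"

definition mapply :: "nat \<Rightarrow> qop \<Rightarrow> qstate \<Rightarrow> qstate" where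
  "mapply n A v = (\<lambda>z. \<Sum>w\<in>bits n. A z w * v w)"

definition inner_q :: "nat \<Rightarrow> qstate \<Rightarrow> qstate \<Rightarrow> complex" where
  "inner_q n u v = (\<Sum>z\<in>bits n. cnj (u z) * v z)"

text \<open>Pauli-X on qubit j (0-based, j < n): flips bit j.\<close>
definition sigma_x :: "nat \<Rightarrow> nat \<Rightarrow> qop" where
  "sigma_x n j = (\<lambda>z w. if z \<in> bits n \<and> w \<in> bits n \<and> w = z[j := \<not> z ! j] then 1 else 0)"

definition Xop :: "nat \<Rightarrow> qop" where
  "Xop n = (\<lambda>z w. \<Sum>j<n. sigma_x n j z w)"

definition Cop :: "bool list set \<Rightarrow> qop" where
  "Cop T = (\<lambda>z w. if z = w \<and> z \<in> T then 1 else 0)"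

definition plus_state :: "nat \<Rightarrow> qstate" where
  "plus_state n = (\<lambda>z. if z \<in> bits n then complex_of_real (1 / sqrt (2 ^ n)) else 0)"

definition qaoa1_state :: "nat \<Rightarrow> bool list set \<Rightarrow> real \<Rightarrow> real \<Rightarrow> qstate" where
  "qaoa1_state n T \<beta> \<gamma> =
     mapply n (mexp n (mscale (- \<i> * complex_of_real \<beta>) (Xop n)))
       (mapply n (mexp n (mscale (- \<i> * complex_of_real \<gamma>) (Cop T))) (plus_state n))"

definition F1 :: "nat \<Rightarrow> bool list set \<Rightarrow> real \<Rightarrow> real \<Rightarrow> complex" where
  "F1 n T \<beta> \<gamma> = inner_q n (qaoa1_state n T \<beta> \<gamma>) (mapply n (Cop T) (qaoa1_state n T \<beta> \<gamma>))"

definition count_d :: "bool list set \<Rightarrow> nat \<Rightarrow> bool list \<Rightarrow> nat" where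
  "count_d T d k = card {z \<in> T. hamming z k = d}"

definition f_n :: "nat \<Rightarrow> real \<Rightarrow> nat \<Rightarrow> complex" where
  "f_n n \<beta> d = complex_of_real (cos \<beta>) ^ (n - d) * (- \<i> * complex_of_real (sin \<beta>)) ^ d"

definition c_k :: "nat \<Rightarrow> bool list set \<Rightarrow> real \<Rightarrow> real \<Rightarrow> bool list \<Rightarrow> complex" where
  "c_k n T \<beta> \<gamma> k = (\<Sum>d=0..n. (of_nat (count_d T d k) * (exp (- \<i> * complex_of_real \<gamma>) - 1)
                                   + of_nat (n choose d)) * f_n n \<beta> d)"

end

theory Submission
  imports Defs
begin

text \<open>The phase operator exp(-i\<gamma>C) multiplies the amplitude 2^(-n/2) of |z> by exp(-i\<gamma>)
  exactly when z \<in> T. The mixer exp(-i\<beta>X) is the n-fold tensor power of cos \<beta> - i sin \<beta> \<sigma>^x,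
  so its (k, z) entry is f_n(\<beta>, d_H(k, z)); we obtain this by diagonalising X with Walsh
  characters and summing the exponential series in the eigenbasis. Hence the amplitude of |k> is
  2^(-n/2) \<Sum>_z f_n(\<beta>, d_H(k, z)) (1 + [z \<in> T] (exp(-i\<gamma>) - 1)), which is 2^(-n/2) c_k once
  the z are grouped by Hamming distance (the full sum by the binomial theorem). Finally F_1 is
  the squared norm of the projection of the state onto T.\<close>

lemma bits_0: "bits 0 = {[]}"
  by (simp add: bits_def)

lemma bits_Suc: "bits (Suc n) = (\<lambda>(s, b). s @ [b]) ` (bits n \<times> UNIV)"
proof (intro equalityI subsetI)
  fix xs assume "xs \<in> bits (Suc n)"
  then show "xs \<in> (\<lambda>(s, b). s @ [b]) ` (bits n \<times> UNIV)"
    by (cases xs rule: rev_cases) (auto simp: bits_def)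
qed (auto simp: bits_def)

lemma finite_bits [simp]: "finite (bits n)"
  by (induction n) (auto simp: bits_0 bits_Suc)

lemma sum_bits_prod:
  fixes g :: "nat \<Rightarrow> bool \<Rightarrow> 'a::comm_semiring_1"
  shows "(\<Sum>s\<in>bits n. \<Prod>i<n. g i (s ! i)) = (\<Prod>i<n. g i False + g i True)"
proof (induction n)
  case 0
  then show ?case by (simp add: bits_0)
next
  case (Suc n)
  have "inj_on (\<lambda>(s, b). s @ [b]) (bits n \<times> UNIV)"
    by (auto simp: inj_on_def)
  then have "(\<Sum>s\<in>bits (Suc n). \<Prod>i<Suc n. g i (s ! i))
      = (\<Sum>s\<in>bits n. \<Sum>b\<in>UNIV. \<Prod>i<Suc n. g i ((s @ [b]) ! i))"
    by (simp add: bits_Suc sum.reindex sum.cartesian_product case_prod_unfold)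
  also have "\<dots> = (\<Sum>s\<in>bits n. \<Sum>b\<in>UNIV. (\<Prod>i<n. g i (s ! i)) * g n b)"
    by (intro sum.cong refl) (auto simp: bits_def nth_append intro!: prod.cong)
  also have "\<dots> = (\<Sum>s\<in>bits n. \<Prod>i<n. g i (s ! i)) * (g n False + g n True)"
    by (simp add: UNIV_bool sum_distrib_right distrib_left sum.distrib)
  finally show ?case
    using Suc by simp
qed

lemma exp_series_sums: "(\<lambda>m. x ^ m / fact m) sums exp (x :: complex)"
  using exp_converges[of x] by (simp add: scaleR_conv_of_real divide_inverse mult.commute)

lemma mexp_eq_sum_exp:
  assumes "finite S" and "\<And>m. mpow n A m z w = (\<Sum>s\<in>S. c s * \<mu> s ^ m)"
  shows "mexp n A z w = (\<Sum>s\<in>S. c s * exp (\<mu> s))"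
proof -
  have "(\<lambda>m. \<Sum>s\<in>S. c s * (\<mu> s ^ m / fact m)) sums (\<Sum>s\<in>S. c s * exp (\<mu> s))"
    by (intro sums_sum sums_mult exp_series_sums)
  then show ?thesis
    by (simp add: mexp_def assms(2) sum_divide_distrib sums_iff)
qed

definition diag_op :: "qstate \<Rightarrow> qop" where
  "diag_op f = (\<lambda>z w. if z = w then f z else 0)"

lemma mscale_Cop: "mscale a (Cop T) = diag_op (\<lambda>z. if z \<in> T then a else 0)"
  by (auto simp: mscale_def Cop_def diag_op_def fun_eq_iff)

lemma Cop_eq_diag_op: "Cop T = diag_op (\<lambda>z. if z \<in> T then 1 else 0)"
  by (auto simp: Cop_def diag_op_def)

lemma mapply_diag_op: "z \<in> bits n \<Longrightarrow> mapply n (diag_op f) v z = f z * v z"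
  by (simp add: mapply_def diag_op_def if_distrib[of "\<lambda>x. x * _"] cong: if_cong)

lemma mpow_diag_op:
  "mpow n (diag_op f) m z w = (if z = w \<and> z \<in> bits n then f z ^ m else 0)"
proof (induction m)
  case (Suc m)
  have "mpow n (diag_op f) (Suc m) z w
      = (if z \<in> bits n then f z * mpow n (diag_op f) m z w else 0)"
    by (simp add: mmul_def diag_op_def if_distrib[of "\<lambda>x. x * _"] cong: if_cong)
  with Suc show ?case
    by auto
qed (auto simp: mid_def)

lemma mexp_diag_op:
  "mexp n (diag_op f) z w = (if z = w \<and> z \<in> bits n then exp (f z) else 0)"
proof (cases "z = w \<and> z \<in> bits n")
  case True
  then have "mexp n (diag_op f) z w = (\<Sum>s\<in>{z}. 1 * exp (f s))"
    by (intro mexp_eq_sum_exp) (simp_all add: mpow_diag_op True)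
  with True show ?thesis
    by auto
next
  case False
  then show ?thesis
    by (simp only: mexp_def mpow_diag_op if_not_P) simp
qed

lemma mapply_mexp_diag_op:
  "z \<in> bits n \<Longrightarrow> mapply n (mexp n (diag_op f)) v z = exp (f z) * v z"
  by (simp add: mapply_def mexp_diag_op if_distrib[of "\<lambda>x. x * _"] cong: if_cong)

lemma bits_list_update [simp]: "z \<in> bits n \<Longrightarrow> z[j := b] \<in> bits n"
  by (simp add: bits_def)

text \<open>For fixed s and w, z \<mapsto> walsh n s z w is an
  eigenvector of X with eigenvalue walsh_eigenvalue n s = n - 2|s|, and these 2^n vectors are
  orthogonal: this diagonalises X.\<close>

definition walsh :: "nat \<Rightarrow> bool list \<Rightarrow> bool list \<Rightarrow> bool list \<Rightarrow> complex" where
  "walsh n s z w = (\<Prod>i<n. if s ! i \<and> z ! i \<noteq> w ! i then -1 else 1)"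

definition walsh_eigenvalue :: "nat \<Rightarrow> bool list \<Rightarrow> complex" where
  "walsh_eigenvalue n s = (\<Sum>j<n. if s ! j then -1 else 1)"

lemma sum_walsh:
  assumes "z \<in> bits n" "w \<in> bits n"
  shows "(\<Sum>s\<in>bits n. walsh n s z w) = (if z = w then 2 ^ n else 0)"
proof -
  have "(\<Sum>s\<in>bits n. walsh n s z w) = (\<Prod>i<n. if z ! i = w ! i then 2 else 0)"
    unfolding walsh_def by (subst sum_bits_prod) (auto intro!: prod.cong)
  also have "\<dots> = (if z = w then 2 ^ n else 0)"
    using assms by (auto simp: bits_def list_eq_iff_nth_eq prod_zero_iff)
  finally show ?thesis .
qed

lemma walsh_flip:
  assumes "j < n" "j < length z"
  shows "walsh n s (z[j := \<not> z ! j]) w = (if s ! j then -1 else 1) * walsh n s z w"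
proof -
  have "walsh n s (z[j := \<not> z ! j]) w
      = (\<Prod>i<n. (if i = j then if s ! j then -1 else 1 else 1)
                  * (if s ! i \<and> z ! i \<noteq> w ! i then -1 else 1))"
    unfolding walsh_def using assms(2) by (intro prod.cong) auto
  then show ?thesis
    using assms(1) by (simp add: prod.distrib walsh_def)
qed

lemma mapply_sigma_x: "z \<in> bits n \<Longrightarrow> mapply n (sigma_x n j) v z = v (z[j := \<not> z ! j])"
  by (simp add: mapply_def sigma_x_def if_distrib[of "\<lambda>x. x * _"] cong: if_cong)

lemma mapply_Xop: "mapply n (Xop n) v z = (\<Sum>j<n. mapply n (sigma_x n j) v z)"
  by (simp add: mapply_def Xop_def sum_distrib_right sum.swap[of _ "{..<n}"])

lemma mapply_Xop_walsh:
  assumes "z \<in> bits n"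
  shows "mapply n (Xop n) (\<lambda>y. walsh n s y w) z = walsh_eigenvalue n s * walsh n s z w"
proof -
  have "mapply n (Xop n) (\<lambda>y. walsh n s y w) z = (\<Sum>j<n. walsh n s (z[j := \<not> z ! j]) w)"
    using assms by (simp add: mapply_Xop mapply_sigma_x)
  also have "\<dots> = (\<Sum>j<n. (if s ! j then -1 else 1) * walsh n s z w)"
    using assms by (intro sum.cong refl walsh_flip) (auto simp: bits_def)
  finally show ?thesis
    by (simp add: walsh_eigenvalue_def sum_distrib_right)
qed

lemma mpow_Xop:
  assumes "z \<in> bits n" "w \<in> bits n"
  shows "mpow n (mscale a (Xop n)) m z w
       = (\<Sum>s\<in>bits n. walsh n s z w / 2 ^ n * (a * walsh_eigenvalue n s) ^ m)"
  using assms(1)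
proof (induction m arbitrary: z)
  case 0
  then show ?case
    using sum_walsh[OF 0 assms(2)] by (simp add: mid_def sum_divide_distrib[symmetric])
next
  case (Suc m)
  define \<mu> where "\<mu> s = a * walsh_eigenvalue n s" for s
  have "mpow n (mscale a (Xop n)) (Suc m) z w
      = (\<Sum>y\<in>bits n. a * Xop n z y * (\<Sum>s\<in>bits n. walsh n s y w / 2 ^ n * \<mu> s ^ m))"
    unfolding mpow.simps mmul_def by (intro sum.cong refl) (simp only: Suc.IH, simp add: \<mu>_def mscale_def)
  also have "\<dots> = (\<Sum>s\<in>bits n. \<Sum>y\<in>bits n. a * \<mu> s ^ m / 2 ^ n * (Xop n z y * walsh n s y w))"
    by (subst sum.swap) (simp add: sum_distrib_left mult_ac)
  also have "\<dots> = (\<Sum>s\<in>bits n. a * \<mu> s ^ m / 2 ^ n * mapply n (Xop n) (\<lambda>y. walsh n s y w) z)"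
    by (simp add: mapply_def sum_distrib_left)
  also have "\<dots> = (\<Sum>s\<in>bits n. walsh n s z w / 2 ^ n * \<mu> s ^ Suc m)"
    by (simp add: mapply_Xop_walsh Suc.prems \<mu>_def mult_ac)
  finally show ?case
    by (simp add: \<mu>_def)
qed

lemma mexp_Xop:
  assumes "z \<in> bits n" "w \<in> bits n"
  shows "mexp n (mscale a (Xop n)) z w = (\<Prod>i<n. if z ! i = w ! i then cosh a else sinh a)"
proof -
  define g where "g i b = (if b \<and> z ! i \<noteq> w ! i then -1 else 1) * exp (if b then -a else a) / 2"
    for i b
  have "walsh n s z w / 2 ^ n * exp (a * walsh_eigenvalue n s) = (\<Prod>i<n. g i (s ! i))" for s
    by (simp add: g_def walsh_def walsh_eigenvalue_def sum_distrib_left exp_sum prod.distrib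
        prod_dividef if_distrib[of "\<lambda>x. a * x"] if_distrib[of exp] cong: if_cong)
  then have "mexp n (mscale a (Xop n)) z w = (\<Sum>s\<in>bits n. \<Prod>i<n. g i (s ! i))"
    using mexp_eq_sum_exp[OF finite_bits mpow_Xop[OF assms]] by simp
  also have "\<dots> = (\<Prod>i<n. g i False + g i True)"
    by (rule sum_bits_prod)
  also have "\<dots> = (\<Prod>i<n. if z ! i = w ! i then cosh a else sinh a)"
    by (intro prod.cong refl) (auto simp: g_def cosh_field_def sinh_field_def add_divide_distrib diff_divide_distrib)
  finally show ?thesis .
qed

lemma hamming_commute: "length x = length y \<Longrightarrow> hamming x y = hamming y x"
  unfolding hamming_def by (intro arg_cong[where f = card]) auto

lemma hamming_le_length: "hamming x y \<le> length x"
proof -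
  have "{j. j < length x \<and> x ! j \<noteq> y ! j} \<subseteq> {..<length x}"
    by auto
  then show ?thesis
    unfolding hamming_def by (metis card_lessThan card_mono finite_lessThan)
qed

lemma prod_nth_eq_hamming:
  fixes c d :: "'a::comm_monoid_mult"
  assumes "length x = n" "length y = n"
  shows "(\<Prod>i<n. if x ! i = y ! i then c else d) = c ^ (n - hamming x y) * d ^ hamming x y"
proof -
  define D where "D = {i. i < n \<and> x ! i \<noteq> y ! i}"
  have "D \<subseteq> {..<n}"
    by (auto simp: D_def)
  then have "card ({..<n} - D) = n - card D"
    by (simp add: card_Diff_subset finite_subset)
  moreover have "(\<Prod>i<n. if x ! i = y ! i then c else d)
      = (\<Prod>i\<in>{..<n} \<inter> {i. x ! i = y ! i}. c) * (\<Prod>i\<in>{..<n} \<inter> - {i. x ! i = y ! i}. d)"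
    by (rule prod.If_cases) simp
  moreover have "{..<n} \<inter> {i. x ! i = y ! i} = {..<n} - D" and "{..<n} \<inter> - {i. x ! i = y ! i} = D"
    by (auto simp: D_def)
  ultimately show ?thesis
    using assms(1) by (simp add: hamming_def D_def)
qed

lemma mexp_Xop_hamming:
  assumes "z \<in> bits n" "w \<in> bits n"
  shows "mexp n (mscale (- \<i> * complex_of_real \<beta>) (Xop n)) z w = f_n n \<beta> (hamming z w)"
proof -
  have "cosh (- \<i> * complex_of_real \<beta>) = complex_of_real (cos \<beta>)"
    and "sinh (- \<i> * complex_of_real \<beta>) = - \<i> * complex_of_real (sin \<beta>)"
    by (simp_all add: cosh_field_def sinh_field_def exp_eq_polar complex_eq_iff)
  with assms show ?thesis
    by (simp add: mexp_Xop prod_nth_eq_hamming bits_def f_n_def)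
qed

lemma sum_bits_hamming_binomial:
  fixes c d :: "'a::comm_semiring_1"
  assumes "k \<in> bits n"
  shows "(\<Sum>w\<in>bits n. c ^ (n - hamming k w) * d ^ hamming k w)
       = (\<Sum>i\<le>n. of_nat (n choose i) * c ^ (n - i) * d ^ i)"
proof -
  have "(\<Sum>w\<in>bits n. c ^ (n - hamming k w) * d ^ hamming k w)
      = (\<Sum>w\<in>bits n. \<Prod>i<n. if k ! i = w ! i then c else d)"
    using assms by (intro sum.cong refl) (simp add: prod_nth_eq_hamming bits_def)
  also have "\<dots> = (d + c) ^ n"
  proof -
    have "(if \<not> b then c else d) + (if b then c else d) = d + c" for b
      by (cases b) (simp_all add: add.commute)
    then show ?thesis
      by (subst sum_bits_prod) simp
  qed
  also have "\<dots> = (\<Sum>i\<le>n. of_nat (n choose i) * c ^ (n - i) * d ^ i)"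
    by (simp add: binomial_ring mult_ac)
  finally show ?thesis .
qed

lemma sum_group_by_hamming:
  fixes g :: "nat \<Rightarrow> 'a::comm_semiring_1"
  assumes "T \<subseteq> bits n"
  shows "(\<Sum>w\<in>T. g (hamming w k)) = (\<Sum>d=0..n. of_nat (count_d T d k) * g d)"
proof -
  have "finite T"
    using assms finite_bits by (rule finite_subset)
  moreover have "(\<lambda>w. hamming w k) ` T \<subseteq> {0..n}"
    using assms hamming_le_length by (fastforce simp: bits_def)
  ultimately have "(\<Sum>w\<in>T. g (hamming w k)) = (\<Sum>d=0..n. \<Sum>w\<in>{w\<in>T. hamming w k = d}. g (hamming w k))"
    by (intro sum.group[symmetric]) simp_all
  then show ?thesis
    by (simp add: count_d_def)
qed

lemma c_k_eq_sum:
  assumes "T \<subseteq> bits n" "k \<in> bits n"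
  shows "c_k n T \<beta> \<gamma> k
       = (\<Sum>w\<in>bits n. f_n n \<beta> (hamming k w) * (if w \<in> T then exp (- \<i> * complex_of_real \<gamma>) else 1))"
proof -
  define E where "E = exp (- \<i> * complex_of_real \<gamma>)"
  have "(\<Sum>w\<in>bits n. f_n n \<beta> (hamming k w) * (if w \<in> T then E else 1))
      = (\<Sum>w\<in>bits n. f_n n \<beta> (hamming k w) + (if w \<in> T then (E - 1) * f_n n \<beta> (hamming w k) else 0))"
    using assms by (intro sum.cong refl) (auto simp: algebra_simps bits_def hamming_commute)
  also have "\<dots> = (\<Sum>w\<in>bits n. f_n n \<beta> (hamming k w)) + (E - 1) * (\<Sum>w\<in>T. f_n n \<beta> (hamming w k))"
    using assms by (simp add: sum.distrib sum.inter_restrict[symmetric] Int_absorb1 sum_distrib_left)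
  also have "(\<Sum>w\<in>bits n. f_n n \<beta> (hamming k w)) = (\<Sum>d=0..n. of_nat (n choose d) * f_n n \<beta> d)"
    using sum_bits_hamming_binomial[OF assms(2)] by (simp add: f_n_def atLeast0AtMost mult.assoc)
  also have "(\<Sum>w\<in>T. f_n n \<beta> (hamming w k)) = (\<Sum>d=0..n. of_nat (count_d T d k) * f_n n \<beta> d)"
    using assms(1) by (rule sum_group_by_hamming)
  finally show ?thesis
    unfolding c_k_def E_def[symmetric] by (simp add: sum.distrib sum_subtractf sum_distrib_left algebra_simps)
qed

lemma qaoa1_state_eq_c_k:
  assumes "T \<subseteq> bits n" "k \<in> bits n"
  shows "qaoa1_state n T \<beta> \<gamma> k = complex_of_real (1 / sqrt (2 ^ n)) * c_k n T \<beta> \<gamma> k"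
proof -
  have phased: "mapply n (mexp n (mscale (- \<i> * complex_of_real \<gamma>) (Cop T))) (plus_state n) w
      = complex_of_real (1 / sqrt (2 ^ n)) * (if w \<in> T then exp (- \<i> * complex_of_real \<gamma>) else 1)"
    if "w \<in> bits n" for w
    using that by (simp add: mscale_Cop mapply_mexp_diag_op plus_state_def)
  have "qaoa1_state n T \<beta> \<gamma> k = (\<Sum>w\<in>bits n. complex_of_real (1 / sqrt (2 ^ n))
      * (f_n n \<beta> (hamming k w) * (if w \<in> T then exp (- \<i> * complex_of_real \<gamma>) else 1)))"
    unfolding qaoa1_state_def mapply_def[of n "mexp n (mscale _ (Xop n))"]
    by (intro sum.cong refl) (simp only: mexp_Xop_hamming[OF assms(2)] phased mult.left_commute)
  then show ?thesis
    by (simp add: c_k_eq_sum[OF assms] sum_distrib_left)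
qed

lemma inner_q_Cop:
  assumes "T \<subseteq> bits n"
  shows "inner_q n v (mapply n (Cop T) v) = complex_of_real (\<Sum>z\<in>T. (cmod (v z))\<^sup>2)"
proof -
  have "inner_q n v (mapply n (Cop T) v) = (\<Sum>z\<in>bits n. if z \<in> T then v z * cnj (v z) else 0)"
    unfolding inner_q_def Cop_eq_diag_op by (intro sum.cong refl) (simp add: mapply_diag_op)
  also have "\<dots> = (\<Sum>z\<in>T. v z * cnj (v z))"
    using assms by (simp add: sum.inter_restrict[symmetric] Int_absorb1)
  finally show ?thesis
    by (simp only: of_real_sum complex_norm_square)
qed

theorem lemma2:
  fixes n :: nat and T :: "bool list set" and \<beta> \<gamma> :: real
  assumes "T \<subseteq> bits n"
  shows "F1 n T \<beta> \<gamma> = complex_of_real ((1 / 2 ^ n) * (\<Sum>k\<in>T. (cmod (c_k n T \<beta> \<gamma> k))\<^sup>2))"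
proof -
  have "(cmod (qaoa1_state n T \<beta> \<gamma> k))\<^sup>2 = 1 / 2 ^ n * (cmod (c_k n T \<beta> \<gamma> k))\<^sup>2"
    if "k \<in> T" for k
  proof -
    have "k \<in> bits n"
      using assms that by blast
    then show ?thesis
      using assms by (simp add: qaoa1_state_eq_c_k norm_divide power_divide)
  qed
  then show ?thesis
    using assms by (simp add: F1_def inner_q_Cop sum_distrib_left)
qed

end
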